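(* Let $r,s$ be positive integers, let $P$ be a lattice path and let $Q=P+(r,s)$ be its translate by $(r,s)$. Suppose there are integers $i<k$ such that $P$ and $Q$ both meet the lines $x+y=i$ and $x+y=k$, and $$x_i(P)>x_i(Q)\quad\text{and}\quad x_k(P)\le x_k(Q).$$ Then $P$ is invalid.
   Context: A lattice path is a path in $\mathbb{Z}^2$ consisting of unit steps north ($N$-steps, adding $(0,1)$) and east ($E$-steps, adding $(1,0)$). For fixed positive integers $r,s$, points $v,w\in\mathbb{Z}^2$ are equivalent if $v-w=\ell(r,s)$ for some $\ell\in\mathbb{Z}$; $[v]$ denotes the class of $v$. A lattice path $P$ is valid if whenever $P$ enters a point $v$ with an $E$-step, every later point of $P$ in $[v]$ is also entered by an $E$-step; otherwise it is invalid. For a path $P$ and a point $v$, $P+v$ is the path obtained by adding $v$ to every point of $P$. For a lattice path $P$ and integer $i$, $v_i(P)=(x_i(P),y_i(P))$ denotes the (unique) point where $P$ meets the line $x+y=i$. *)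

theory Defs
  imports Main
begin

definition lattice_path :: "(int \<times> int) list \<Rightarrow> bool" where
  "lattice_path ps \<longleftrightarrow> ps \<noteq> [] \<and>
     (\<forall>j. Suc j < length ps \<longrightarrow>
        ps ! Suc j = (fst (ps ! j), snd (ps ! j) + 1) \<or>
        ps ! Suc j = (fst (ps ! j) + 1, snd (ps ! j)))"

definition E_entered :: "(int \<times> int) list \<Rightarrow> nat \<Rightarrow> bool" where
  "E_entered ps j \<longleftrightarrow> 0 < j \<and> j < length ps \<and>
     ps ! j = (fst (ps ! (j - 1)) + 1, snd (ps ! (j - 1)))"

definition equiv_rs :: "int \<Rightarrow> int \<Rightarrow> int \<times> int \<Rightarrow> int \<times> int \<Rightarrow> bool" where
  "equiv_rs r s v w \<longleftrightarrow> (\<exists>l::int. fst v - fst w = l * r \<and> snd v - snd w = l * s)"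

definition valid_path :: "int \<Rightarrow> int \<Rightarrow> (int \<times> int) list \<Rightarrow> bool" where
  "valid_path r s ps \<longleftrightarrow>
     (\<forall>j l. E_entered ps j \<and> j < l \<and> l < length ps \<and> equiv_rs r s (ps ! l) (ps ! j)
        \<longrightarrow> E_entered ps l)"

definition translate_path :: "(int \<times> int) list \<Rightarrow> int \<times> int \<Rightarrow> (int \<times> int) list" where
  "translate_path ps v = map (\<lambda>p. (fst p + fst v, snd p + snd v)) ps"

definition meets_line :: "(int \<times> int) list \<Rightarrow> int \<Rightarrow> bool" where
  "meets_line ps i \<longleftrightarrow> (\<exists>p \<in> set ps. fst p + snd p = i)"

definition x_at :: "(int \<times> int) list \<Rightarrow> int \<Rightarrow> int" where
  "x_at ps i = fst (THE p. p \<in> set ps \<and> fst p + snd p = i)"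

end

theory Submission
  imports Defs
begin

text \<open>Index the points of a lattice path by their level \<open>x + y\<close>; then \<open>Q\<close> is \<open>P\<close> shifted by
  \<open>m = r + s\<close> levels, and \<open>x\<^sub>t(P) - x\<^sub>t(Q)\<close> changes by at most one per level. If it drops
  from positive to non-positive, then at that level it goes from \<open>1\<close> to \<open>0\<close>: \<open>Q\<close> takes an
  E-step while \<open>P\<close> takes an N-step, and the two points entered differ by exactly \<open>(r, s)\<close>.
  So \<open>P\<close> enters a point by an E-step and a later equivalent point by an N-step.\<close>

lemma lattice_path_nth_Suc:
  assumes "lattice_path P" "Suc j < length P"
  shows "P ! Suc j = (fst (P ! j), snd (P ! j) + 1) \<or> P ! Suc j = (fst (P ! j) + 1, snd (P ! j))"
  using assms unfolding lattice_path_def by blast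

lemma lattice_path_fst_Suc:
  assumes "lattice_path P" "Suc j < length P"
  shows "fst (P ! Suc j) = fst (P ! j) \<or> fst (P ! Suc j) = fst (P ! j) + 1"
  using lattice_path_nth_Suc[OF assms] by auto

lemma lattice_path_E_entered_iff:
  assumes "lattice_path P" "Suc j < length P"
  shows "E_entered P (Suc j) \<longleftrightarrow> fst (P ! Suc j) = fst (P ! j) + 1"
  using lattice_path_nth_Suc[OF assms] assms(2) unfolding E_entered_def by auto

lemma lattice_path_level:
  assumes "lattice_path P" "j < length P"
  shows "fst (P ! j) + snd (P ! j) = fst (P ! 0) + snd (P ! 0) + int j"
  using assms(2)
proof (induction j)
  case 0
  then show ?case by simp
next
  case (Suc j)
  then show ?case using lattice_path_nth_Suc[OF assms(1) Suc.prems] by auto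
qed

lemma meets_line_lattice_path:
  assumes "lattice_path P" "meets_line P t"
  obtains j where "j < length P" "t = fst (P ! 0) + snd (P ! 0) + int j"
proof -
  obtain p where "p \<in> set P" "fst p + snd p = t"
    using assms(2) unfolding meets_line_def by blast
  then obtain j where "j < length P" "p = P ! j" by (auto simp: in_set_conv_nth)
  then show ?thesis using that lattice_path_level[OF assms(1)] \<open>fst p + snd p = t\<close> by auto
qed

lemma x_at_lattice_path:
  assumes "lattice_path P" "j < length P"
  shows "x_at P (fst (P ! 0) + snd (P ! 0) + int j) = fst (P ! j)"
proof -
  let ?t = "fst (P ! 0) + snd (P ! 0) + int j"
  have "(THE p. p \<in> set P \<and> fst p + snd p = ?t) = P ! j"
  proof (rule the_equality)
    show "P ! j \<in> set P \<and> fst (P ! j) + snd (P ! j) = ?t"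
      using assms lattice_path_level by auto
  next
    fix p assume "p \<in> set P \<and> fst p + snd p = ?t"
    then obtain j' where "j' < length P" "p = P ! j'" "fst p + snd p = ?t"
      by (auto simp: in_set_conv_nth)
    then show "p = P ! j" using lattice_path_level[OF assms(1)] by auto
  qed
  then show ?thesis unfolding x_at_def by simp
qed

lemma length_translate_path [simp]: "length (translate_path P v) = length P"
  unfolding translate_path_def by simp

lemma nth_translate_path [simp]:
  "j < length P \<Longrightarrow> translate_path P v ! j = (fst (P ! j) + fst v, snd (P ! j) + snd v)"
  unfolding translate_path_def by simp

lemma lattice_path_translate_path:
  "lattice_path P \<Longrightarrow> lattice_path (translate_path P v)"
  unfolding lattice_path_def translate_path_def by auto

lemma valid_pathD:
  "valid_path r s P \<Longrightarrow> E_entered P j \<Longrightarrow> j < l \<Longrightarrow> l < length P \<Longrightarrow>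
    equiv_rs r s (P ! l) (P ! j) \<Longrightarrow> E_entered P l"
  unfolding valid_path_def by blast

text \<open>For \<open>P\<close> and its translate \<open>Q\<close>, the point \<open>P ! (j + m)\<close> lies on the same level as \<open>Q ! j\<close>,
  and \<open>fst (P ! (j + m)) > fst (P ! j) + r\<close> says that \<open>P\<close> lies strictly to the right of \<open>Q\<close> there.\<close>

lemma valid_path_right_of_translate_Suc:
  assumes path: "lattice_path P" and valid: "valid_path r s P"
    and m: "int m = r + s" "0 < m" and len: "Suc j + m < length P"
    and right: "fst (P ! (j + m)) > fst (P ! j) + r"
  shows "fst (P ! (Suc j + m)) > fst (P ! Suc j) + r"
proof (rule ccontr)
  assume not_right: "\<not> fst (P ! (Suc j + m)) > fst (P ! Suc j) + r"
  have "fst (P ! Suc (j + m)) = fst (P ! (j + m)) \<or> fst (P ! Suc (j + m)) = fst (P ! (j + m)) + 1"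
    "fst (P ! Suc j) = fst (P ! j) \<or> fst (P ! Suc j) = fst (P ! j) + 1"
    using lattice_path_fst_Suc[OF path] len by simp_all
  then have E: "E_entered P (Suc j)" and N: "\<not> E_entered P (Suc (j + m))"
    and x_diff: "fst (P ! Suc (j + m)) - fst (P ! Suc j) = r"
    using right not_right lattice_path_E_entered_iff[OF path] len by auto
  have "fst (P ! Suc (j + m)) + snd (P ! Suc (j + m)) = fst (P ! Suc j) + snd (P ! Suc j) + int m"
    using lattice_path_level[OF path] len by simp
  then have "equiv_rs r s (P ! Suc (j + m)) (P ! Suc j)"
    unfolding equiv_rs_def using x_diff m(1) by (intro exI[of _ 1]) auto
  moreover have "Suc j < Suc (j + m)" using m(2) by simp
  ultimately have "E_entered P (Suc (j + m))"
    using valid_pathD[OF valid E] len by simp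
  with N show False ..
qed

lemma valid_path_right_of_translate:
  assumes "lattice_path P" "valid_path r s P" "int m = r + s" "0 < m"
    and "j1 \<le> j2" "j2 + m < length P"
    and "fst (P ! (j1 + m)) > fst (P ! j1) + r"
  shows "fst (P ! (j2 + m)) > fst (P ! j2) + r"
  using assms(5,6)
proof (induction j2 rule: dec_induct)
  case base
  show ?case by (fact assms(7))
next
  case (step j)
  then show ?case using valid_path_right_of_translate_Suc[OF assms(1-4)] by simp
qed

theorem mainTheorem2:
  fixes r s i k :: int and P Q :: "(int \<times> int) list"
  assumes "r > 0" and "s > 0"
    and "lattice_path P"
    and "Q = translate_path P (r, s)"
    and "i < k"
    and "meets_line P i" and "meets_line Q i"
    and "meets_line P k" and "meets_line Q k"
    and "x_at P i > x_at Q i"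
    and "x_at P k \<le> x_at Q k"
  shows "\<not> valid_path r s P"
proof
  assume valid: "valid_path r s P"
  define a where "a = fst (P ! 0) + snd (P ! 0)"
  define m where "m = nat (r + s)"
  have m: "int m = r + s" "0 < m" using assms(1,2) unfolding m_def by auto
  have Q: "lattice_path Q" "length Q = length P"
    using assms(3,4) lattice_path_translate_path by auto
  have Q_level: "fst (Q ! 0) + snd (Q ! 0) = a + int m"
    using assms(3,4) m unfolding a_def lattice_path_def by auto
  obtain ji where ji: "ji < length P" "i = a + int m + int ji"
    using meets_line_lattice_path[OF Q(1) assms(7)] Q Q_level by metis
  obtain jk where jk: "jk < length P" "k = a + int m + int jk"
    using meets_line_lattice_path[OF Q(1) assms(9)] Q Q_level by metis
  obtain jk' where jk': "jk' < length P" "k = a + int jk'"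
    using meets_line_lattice_path[OF assms(3,8)] unfolding a_def by metis
  have order: "ji \<le> jk" "jk + m < length P" using ji jk jk' assms(5) by auto
  have "x_at P i = fst (P ! (ji + m))" "x_at P k = fst (P ! (jk + m))"
    using x_at_lattice_path[OF assms(3), of "ji + m"] x_at_lattice_path[OF assms(3), of "jk + m"]
      ji jk order unfolding a_def by (simp_all add: add.assoc add.commute)
  moreover have "x_at Q i = fst (P ! ji) + r" "x_at Q k = fst (P ! jk) + r"
    using x_at_lattice_path[OF Q(1), of ji] x_at_lattice_path[OF Q(1), of jk]
      ji jk Q Q_level assms(4) by auto
  ultimately show False
    using valid_path_right_of_translate[OF assms(3) valid m order] assms(10,11) by simp
qed

end
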